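(* Let $q$ be a prime power and let $\mathcal{H}_q$ be the Hermitian unital. If $s \geq 3$ lines of $\mathcal{H}_q$ pairwise intersect, then either all of them contain a common point of $\mathcal{H}_q$, or they form an $s$-fan.
   Context: The Hermitian unital $\mathcal{H}_q$ is the partial linear space whose point set is $P(\mathcal{H}_q)=\{\langle x,y,z\rangle \subset \mathbb{F}_{q^2}^3 : x^{q+1}+y^{q+1}+z^{q+1}=0\}$ (points of the projective plane $\mathrm{PG}(2,q^2)$, i.e. one-dimensional subspaces of $\mathbb{F}_{q^2}^3$), and whose lines are the intersections with $P(\mathcal{H}_q)$ of those lines of $\mathrm{PG}(2,q^2)$ meeting $P(\mathcal{H}_q)$ in exactly $q+1$ points (every line of $\mathrm{PG}(2,q^2)$ meets $P(\mathcal{H}_q)$ in $1$ or $q+1$ points). For $s \geq 3$, an $s$-fan is a set of $s$ pairwise intersecting lines such that $s-1$ of the lines all pass through a common point while the remaining line does not pass through that point. *)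

theory Defs
  imports "HOL-Computational_Algebra.Primes" "HOL-Library.Cardinality"
begin

type_synonym 'a vec3 = "'a \<times> 'a \<times> 'a"

definition prime_power :: "nat \<Rightarrow> bool" where
  "prime_power q \<longleftrightarrow> (\<exists>p k. prime p \<and> k \<ge> 1 \<and> q = p ^ k)"

definition span1 :: "'a::field vec3 \<Rightarrow> 'a vec3 set" where
  "span1 v = (\<lambda>c. (c * fst v, c * fst (snd v), c * snd (snd v))) ` UNIV"

definition pg_points :: "'a::field vec3 set set" where
  "pg_points = {span1 v | v. v \<noteq> (0, 0, 0)}"

text \<open>Hermitian form x^(q+1)+y^(q+1)+z^(q+1); the field is F_{q^2}.\<close>
definition herm_form :: "nat \<Rightarrow> 'a::field vec3 \<Rightarrow> 'a" where
  "herm_form q v = fst v ^ (q + 1) + fst (snd v) ^ (q + 1) + snd (snd v) ^ (q + 1)"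

definition herm_points :: "nat \<Rightarrow> 'a::field vec3 set set" where
  "herm_points q = {span1 v | v. v \<noteq> (0, 0, 0) \<and> herm_form q v = 0}"

definition pg_line :: "'a::field vec3 \<Rightarrow> 'a vec3 set set" where
  "pg_line l = {span1 v | v. v \<noteq> (0, 0, 0) \<and>
      fst l * fst v + fst (snd l) * fst (snd v) + snd (snd l) * snd (snd v) = 0}"

definition herm_lines :: "nat \<Rightarrow> 'a::field vec3 set set set" where
  "herm_lines q = {pg_line l \<inter> herm_points q | l. l \<noteq> (0, 0, 0) \<and>
      card (pg_line l \<inter> herm_points q) = q + 1}"

definition is_fan :: "'p set set \<Rightarrow> bool" where
  "is_fan L \<longleftrightarrow> card L \<ge> 3 \<and> (\<forall>l1\<in>L. \<forall>l2\<in>L. l1 \<inter> l2 \<noteq> {}) \<and>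
     (\<exists>P l0. l0 \<in> L \<and> P \<notin> l0 \<and> (\<forall>l\<in>L - {l0}. P \<in> l))"

end

(* Two lines of the unital meet in at most one point.  If s >= 3 pairwise meeting lines are
   neither concurrent nor a fan, every point misses at least two of them, and this produces an
   O'Nan configuration: lines a, b through P and c, d through Q meeting in four further points
   R1 = a c, R2 = a d, R3 = b c, R4 = b d.  The unital contains none: P, R4, R3 would be collinear
   points on the sides of the triangle Q R1 R2 of isotropic points, and for the Hermitian form with
   conjugation x -> x^q, Menelaus' relation forces the Gram determinant of Q, R1, R2, which is the
   norm of det(Q, R1, R2), to vanish. *)

theory Submission
  imports Defs "HOL-Number_Theory.Residues" "HOL-Library.Product_Plus"
begin

section \<open>The Frobenius involution of a field of order \<open>q\<^sup>2\<close>\<close>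

text \<open>The library's \<open>finite_field_power_card_eq_same\<close> is stated for the class
  \<open>finite_field\<close>, which a type of sort \<open>{field, finite}\<close> does not carry.\<close>

lemma finite_field_power_card:
  fixes x :: "'a::{field,finite}"
  shows "x ^ CARD('a) = x"
proof (cases "x = 0")
  case True
  then show ?thesis
    using finite_UNIV_card_ge_0[where ?'a = 'a] by simp
next
  case False
  define G :: "'a monoid" where "G = \<lparr>carrier = UNIV - {0::'a}, monoid.mult = (*), one = 1\<rparr>"
  have "group G"
    by (rule groupI) (auto simp: G_def mult.assoc intro!: bexI[of _ "inverse _"])
  moreover have "y [^]\<^bsub>G\<^esub> n = y ^ n" for y :: 'a and n :: nat
    by (induction n) (simp_all add: G_def)
  ultimately have "x ^ (CARD('a) - 1) = 1"
    using group.pow_order_eq_1[of G x] False by (simp add: G_def order_def card_Diff_singleton)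
  moreover have "CARD('a) = Suc (CARD('a) - 1)"
    using finite_UNIV_card_ge_0[where ?'a = 'a] by simp
  ultimately show ?thesis
    by (metis mult.right_neutral power_Suc)
qed

lemma frobenius_add:
  fixes x y :: "'a::{field,finite}"
  assumes "prime_power q" "CARD('a) = q ^ 2"
  shows "(x + y) ^ q = x ^ q + y ^ q"
proof -
  obtain p k where pk: "prime p" "k \<ge> 1" "q = p ^ k"
    using assms(1) unfolding prime_power_def by auto
  have char_prime: "prime CHAR('a)"
    using prime_CHAR_semidom finite_imp_CHAR_pos[where ?'a = 'a] by simp
  moreover have "CHAR('a) dvd p ^ (2 * k)"
    using CHAR_dvd_CARD[where 'a='a] assms(2) pk by (simp add: power_mult mult.commute)
  then have "CHAR('a) = p"
    using char_prime pk(1) prime_dvd_power primes_dvd_imp_eq by blast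
  ultimately show ?thesis
    using pk(3) by (intro freshmans_dream') auto
qed

lemma frobenius_involutive:
  fixes x :: "'a::{field,finite}"
  assumes "CARD('a) = q ^ 2"
  shows "(x ^ q) ^ q = x"
  using finite_field_power_card[of x] assms by (simp add: power_mult[symmetric] power2_eq_square)

section \<open>Vectors in \<open>F\<^sup>3\<close>\<close>

definition scale3 :: "'a::comm_ring_1 \<Rightarrow> 'a vec3 \<Rightarrow> 'a vec3" where
  "scale3 c v = (c * fst v, c * fst (snd v), c * snd (snd v))"

definition dot3 :: "'a::comm_ring_1 vec3 \<Rightarrow> 'a vec3 \<Rightarrow> 'a" where
  "dot3 u v = fst u * fst v + fst (snd u) * fst (snd v) + snd (snd u) * snd (snd v)"

definition cross3 :: "'a::comm_ring_1 vec3 \<Rightarrow> 'a vec3 \<Rightarrow> 'a vec3" where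
  "cross3 u v = (fst (snd u) * snd (snd v) - snd (snd u) * fst (snd v),
                 snd (snd u) * fst v - fst u * snd (snd v),
                 fst u * fst (snd v) - fst (snd u) * fst v)"

definition det3 :: "'a::comm_ring_1 vec3 \<Rightarrow> 'a vec3 \<Rightarrow> 'a vec3 \<Rightarrow> 'a" where
  "det3 u v w = dot3 u (cross3 v w)"

lemmas vec3_defs = scale3_def dot3_def cross3_def det3_def

lemma scale3_scale3 [simp]: "scale3 c (scale3 d v) = scale3 (c * d) v"
  by (simp add: scale3_def mult.assoc)

lemma vec3_eq_0_iff [simp]: "(a, b, c) = 0 \<longleftrightarrow> a = 0 \<and> b = 0 \<and> c = 0"
  by (simp add: zero_prod_def)

lemma zero_vec3 [simp]: "(0, 0, 0) = 0"
  by simp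

lemma scale3_eq_0_iff: "scale3 c v = 0 \<longleftrightarrow> c = 0 \<or> v = (0::'a::idom vec3)"
  by (cases v) (auto simp: scale3_def)

lemma scale3_0 [simp]: "scale3 0 v = 0"
  by (simp add: scale3_def)

lemma dot3_scale3 [simp]: "dot3 u (scale3 c v) = c * dot3 u v"
  by (simp add: vec3_defs algebra_simps)

lemma det3_rotate: "det3 u v w = det3 v w u"
  by (simp add: vec3_defs algebra_simps)

lemma det3_scale3: "det3 (scale3 c u) (scale3 c v) (scale3 c w) = c ^ 3 * det3 u v w"
  by (simp add: vec3_defs algebra_simps power3_eq_cube)

lemma det3_add_scale3:
  "det3 (scale3 x2 B + scale3 x3 C) (scale3 y3 C + scale3 y1 A) (scale3 z1 A + scale3 z2 B)
     = (x2 * y3 * z1 + x3 * y1 * z2) * det3 A B C"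
  by (simp add: vec3_defs algebra_simps)

lemma cramer3:
  "scale3 (det3 A B C) X = scale3 (det3 X B C) A + scale3 (det3 A X C) B + scale3 (det3 A B X) C"
  by (simp add: vec3_defs algebra_simps)

lemma cramer3_dual:
  "scale3 (det3 u v w) l =
     scale3 (dot3 l u) (cross3 v w) + scale3 (dot3 l v) (cross3 w u) + scale3 (dot3 l w) (cross3 u v)"
  by (simp add: vec3_defs algebra_simps)

lemma det3_gram:
  "det3 (dot3 A U, dot3 A V, dot3 A W) (dot3 B U, dot3 B V, dot3 B W) (dot3 C U, dot3 C V, dot3 C W)
     = det3 A B C * det3 U V W"
  by (simp add: vec3_defs algebra_simps)

lemma cross3_eq_0_imp_parallel:
  fixes u v :: "'a::field vec3"
  assumes "u \<noteq> 0" "cross3 u v = 0"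
  obtains t where "v = scale3 t u"
proof -
  obtain u1 u2 u3 v1 v2 v3 where uv: "u = (u1, u2, u3)" "v = (v1, v2, v3)"
    by (cases u, cases v) auto
  have "u2 * v3 = u3 * v2" "u3 * v1 = u1 * v3" "u1 * v2 = u2 * v1"
    using assms(2) by (auto simp: cross3_def uv)
  moreover have "u1 \<noteq> 0 \<or> u2 \<noteq> 0 \<or> u3 \<noteq> 0"
    using assms(1) uv by auto
  ultimately have "v = scale3 (v1 / u1) u \<or> v = scale3 (v2 / u2) u \<or> v = scale3 (v3 / u3) u"
    by (auto simp: uv scale3_def field_simps)
  then show thesis
    using that by blast
qed

section \<open>Points and lines of the Hermitian unital\<close>

lemma span1_eq_image_scale3: "span1 v = (\<lambda>c. scale3 c v) ` UNIV"
  by (simp add: span1_def scale3_def)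

lemma span1_scale3: "span1 (scale3 c v) = span1 (v::'a::field vec3)" if "c \<noteq> 0"
proof -
  have "range (\<lambda>d. d * c) = UNIV"
    using that by (intro surjI[of _ "\<lambda>d. d / c"]) simp
  then have "(\<lambda>d. scale3 d v) ` range (\<lambda>d. d * c) = range (\<lambda>d. scale3 d v)"
    by simp
  then show ?thesis
    unfolding span1_eq_image_scale3 scale3_scale3 image_image .
qed

lemma self_mem_span1: "v \<in> span1 v"
  unfolding span1_eq_image_scale3 by (rule image_eqI[where x = 1]) (simp_all add: scale3_def)

lemma span1_eqE:
  fixes u v :: "'a::field vec3"
  assumes "span1 u = span1 v" "u \<noteq> 0"
  obtains c where "c \<noteq> 0" "u = scale3 c v"
proof -
  obtain c where "u = scale3 c v"
    using self_mem_span1[of u] assms(1) by (auto simp: span1_eq_image_scale3)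
  with assms(2) that show thesis
    by (auto simp: scale3_eq_0_iff)
qed

lemma span1_mem_zero_set_iff:
  fixes f :: "'a::field vec3 \<Rightarrow> 'a"
  assumes homogeneous: "\<And>c w. f (scale3 c w) = 0 \<longleftrightarrow> c = 0 \<or> f w = 0" and "v \<noteq> 0"
  shows "span1 v \<in> {span1 w | w. w \<noteq> 0 \<and> f w = 0} \<longleftrightarrow> f v = 0"
proof
  assume "span1 v \<in> {span1 w | w. w \<noteq> 0 \<and> f w = 0}"
  then obtain w where "span1 v = span1 w" "f w = 0"
    by auto
  moreover obtain c where "v = scale3 c w"
    using span1_eqE[OF \<open>span1 v = span1 w\<close> \<open>v \<noteq> 0\<close>] by blast
  ultimately show "f v = 0"
    by (simp add: homogeneous)
qed (use assms(2) in blast)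

lemma pg_line_eq: "pg_line l = {span1 w | w. w \<noteq> 0 \<and> dot3 l w = 0}"
  by (simp add: pg_line_def dot3_def)

lemma span1_mem_pg_line_iff: "v \<noteq> 0 \<Longrightarrow> span1 v \<in> pg_line l \<longleftrightarrow> dot3 l v = 0"
  unfolding pg_line_eq by (rule span1_mem_zero_set_iff) simp

lemma herm_form_scale3: "herm_form q (scale3 c v) = c ^ (q + 1) * herm_form q v"
  by (simp add: herm_form_def scale3_def power_mult_distrib algebra_simps)

lemma span1_mem_herm_points_iff: "v \<noteq> 0 \<Longrightarrow> span1 v \<in> herm_points q \<longleftrightarrow> herm_form q v = 0"
  unfolding herm_points_def zero_vec3 by (rule span1_mem_zero_set_iff) (auto simp: herm_form_scale3)

definition rep_vec :: "'a::field vec3 set \<Rightarrow> 'a vec3" where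
  "rep_vec X = (SOME v. v \<noteq> 0 \<and> X = span1 v)"

lemma rep_vec:
  assumes "X \<in> pg_points"
  shows "rep_vec X \<noteq> 0" "span1 (rep_vec X) = X"
proof -
  have "\<exists>v. v \<noteq> 0 \<and> X = span1 v"
    using assms by (auto simp: pg_points_def)
  then have "rep_vec X \<noteq> 0 \<and> X = span1 (rep_vec X)"
    unfolding rep_vec_def by (rule someI_ex)
  then show "rep_vec X \<noteq> 0" "span1 (rep_vec X) = X"
    by simp_all
qed

lemma herm_points_subset_pg_points: "herm_points q \<subseteq> pg_points"
  by (auto simp: herm_points_def pg_points_def)

lemma herm_form_rep_vec:
  assumes "X \<in> herm_points q"
  shows "herm_form q (rep_vec X) = 0"
proof -
  have "X \<in> pg_points"
    using assms herm_points_subset_pg_points by blast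
  then show ?thesis
    using assms span1_mem_herm_points_iff[OF rep_vec(1)] rep_vec(2) by metis
qed

lemma herm_lines_subset: "m \<in> herm_lines q \<Longrightarrow> m \<subseteq> herm_points q"
  by (auto simp: herm_lines_def)

lemma cross3_neq_0:
  fixes u v :: "'a::field vec3"
  assumes "u \<noteq> 0" "v \<noteq> 0" "span1 u \<noteq> span1 v"
  shows "cross3 u v \<noteq> 0"
proof
  assume "cross3 u v = 0"
  then obtain t where "v = scale3 t u"
    by (rule cross3_eq_0_imp_parallel[OF assms(1)])
  moreover from this have "t \<noteq> 0"
    using assms(2) by auto
  ultimately show False
    using assms(3) by (simp add: span1_scale3)
qed

text \<open>The coordinate vector of the line is orthogonal to \<open>x\<close> and \<open>y\<close>, hence proportional to
  \<open>cross3 x y\<close> by \<open>cramer3_dual\<close>.\<close>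
lemma mem_herm_line_iff_det3:
  assumes m: "m \<in> herm_lines q" and XY: "X \<in> m" "Y \<in> m" "X \<noteq> Y" and Z: "Z \<in> herm_points q"
  shows "Z \<in> m \<longleftrightarrow> det3 (rep_vec X) (rep_vec Y) (rep_vec Z) = 0"
proof -
  obtain l where l: "l \<noteq> 0" "m = pg_line l \<inter> herm_points q"
    using m unfolding herm_lines_def zero_vec3 by blast
  have pts: "X \<in> pg_points" "Y \<in> pg_points" "Z \<in> pg_points"
    using XY Z herm_lines_subset[OF m] herm_points_subset_pg_points by blast+
  define x y z where "x = rep_vec X" and "y = rep_vec Y" and "z = rep_vec Z"
  note x = rep_vec[OF pts(1), folded x_def] and y = rep_vec[OF pts(2), folded y_def]
    and z = rep_vec[OF pts(3), folded z_def]
  have on_l: "W \<in> m \<longleftrightarrow> dot3 l w = 0" if "W \<in> herm_points q" "w \<noteq> 0" "span1 w = W" for W w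
    using l(2) that span1_mem_pg_line_iff[OF that(2)] by blast
  have "dot3 l x = 0" "dot3 l y = 0"
    using XY herm_lines_subset[OF m] on_l x y by blast+
  then have "scale3 (det3 x y z) l = scale3 (dot3 l z) (cross3 x y)"
    using cramer3_dual[of x y z l] by simp
  moreover have "cross3 x y \<noteq> 0"
    using x y XY(3) by (simp add: cross3_neq_0)
  ultimately have "det3 x y z = 0 \<longleftrightarrow> dot3 l z = 0"
    using l(1) scale3_eq_0_iff by metis
  then show ?thesis
    using on_l[OF Z z] unfolding x_def y_def z_def by simp
qed

lemma herm_lines_meet_at_most_once:
  assumes "l \<in> herm_lines q" "m \<in> herm_lines q" "l \<noteq> m" "X \<in> l \<inter> m" "Y \<in> l \<inter> m"
  shows "X = Y"
proof (rule ccontr)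
  assume "X \<noteq> Y"
  then have "Z \<in> l \<longleftrightarrow> Z \<in> m" if "Z \<in> herm_points q" for Z
    using mem_herm_line_iff_det3[OF assms(1) _ _ \<open>X \<noteq> Y\<close> that]
      mem_herm_line_iff_det3[OF assms(2) _ _ \<open>X \<noteq> Y\<close> that] assms(4,5)
    by simp
  then have "l = m"
    using herm_lines_subset[OF assms(1)] herm_lines_subset[OF assms(2)] by blast
  with assms(3) show False ..
qed

section \<open>Hermitian forms and O'Nan configurations\<close>

definition conj3 :: "('a \<Rightarrow> 'a) \<Rightarrow> 'a vec3 \<Rightarrow> 'a vec3" where
  "conj3 \<sigma> v = (\<sigma> (fst v), \<sigma> (fst (snd v)), \<sigma> (snd (snd v)))"

definition herm_prod :: "('a::comm_ring_1 \<Rightarrow> 'a) \<Rightarrow> 'a vec3 \<Rightarrow> 'a vec3 \<Rightarrow> 'a" where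
  "herm_prod \<sigma> u v = dot3 u (conj3 \<sigma> v)"

lemma herm_form_eq_herm_prod: "herm_form q v = herm_prod (\<lambda>x. x ^ q) v v"
  by (simp add: herm_form_def herm_prod_def dot3_def conj3_def)

locale involutive_automorphism =
  fixes \<sigma> :: "'a::idom \<Rightarrow> 'a"
  assumes hom_add: "\<sigma> (x + y) = \<sigma> x + \<sigma> y"
    and hom_mult: "\<sigma> (x * y) = \<sigma> x * \<sigma> y"
    and involutive: "\<sigma> (\<sigma> x) = x"
begin

abbreviation isotropic :: "'a vec3 \<Rightarrow> bool" where
  "isotropic v \<equiv> herm_prod \<sigma> v v = 0"

lemma hom_zero [simp]: "\<sigma> 0 = 0"
  using hom_add[of 0 0] by (metis add_0 add_cancel_right_right)

lemma hom_eq_0_iff [simp]: "\<sigma> x = 0 \<longleftrightarrow> x = 0"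
  by (metis hom_zero involutive)

lemma hom_minus: "\<sigma> (- x) = - \<sigma> x"
  using hom_add[of x "- x"] by (simp add: eq_neg_iff_add_eq_0 add.commute)

lemma herm_prod_commute: "herm_prod \<sigma> v u = \<sigma> (herm_prod \<sigma> u v)"
  by (simp add: herm_prod_def dot3_def conj3_def hom_add hom_mult involutive mult.commute)

lemma herm_prod_scale3: "herm_prod \<sigma> (scale3 c v) (scale3 c v) = c * \<sigma> c * herm_prod \<sigma> v v"
  by (simp add: herm_prod_def dot3_def conj3_def scale3_def hom_mult algebra_simps)

lemma herm_prod_isotropic_add:
  assumes "isotropic B" "isotropic C"
  shows "herm_prod \<sigma> (scale3 a B + scale3 b C) (scale3 a B + scale3 b C)
    = a * \<sigma> b * herm_prod \<sigma> B C + \<sigma> (a * \<sigma> b * herm_prod \<sigma> B C)"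
proof -
  have "herm_prod \<sigma> (scale3 a B + scale3 b C) (scale3 a B + scale3 b C)
      = a * \<sigma> a * herm_prod \<sigma> B B + a * \<sigma> b * herm_prod \<sigma> B C
        + b * \<sigma> a * herm_prod \<sigma> C B + b * \<sigma> b * herm_prod \<sigma> C C"
    by (simp add: herm_prod_def dot3_def conj3_def scale3_def hom_add hom_mult algebra_simps)
  then show ?thesis
    using assms by (simp add: herm_prod_commute[of C B] hom_mult involutive)
qed

lemma hom_det3: "\<sigma> (det3 A B C) = det3 (conj3 \<sigma> A) (conj3 \<sigma> B) (conj3 \<sigma> C)"
proof -
  have hom_diff: "\<sigma> (x - y) = \<sigma> x - \<sigma> y" for x y
    using hom_add[of x "- y"] hom_minus by simp
  show ?thesis
    by (simp add: vec3_defs conj3_def hom_add hom_mult hom_diff)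
qed

text \<open>The Gram matrix of three isotropic vectors has zero diagonal, so its determinant
  is a trace.\<close>
lemma isotropic_gram:
  assumes "isotropic A" "isotropic B" "isotropic C"
  shows "herm_prod \<sigma> A B * herm_prod \<sigma> B C * herm_prod \<sigma> C A
      + \<sigma> (herm_prod \<sigma> A B * herm_prod \<sigma> B C * herm_prod \<sigma> C A)
    = det3 A B C * \<sigma> (det3 A B C)"
proof -
  define \<alpha> \<beta> \<gamma> where "\<alpha> = herm_prod \<sigma> A B" and "\<beta> = herm_prod \<sigma> B C" and "\<gamma> = herm_prod \<sigma> C A"
  have "det3 A B C * \<sigma> (det3 A B C) =
      det3 (herm_prod \<sigma> A A, herm_prod \<sigma> A B, herm_prod \<sigma> A C)
           (herm_prod \<sigma> B A, herm_prod \<sigma> B B, herm_prod \<sigma> B C)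
           (herm_prod \<sigma> C A, herm_prod \<sigma> C B, herm_prod \<sigma> C C)"
    by (simp add: det3_gram hom_det3 herm_prod_def)
  also have "\<dots> = det3 (0, \<alpha>, \<sigma> \<gamma>) (\<sigma> \<alpha>, 0, \<beta>) (\<gamma>, \<sigma> \<beta>, 0)"
    using assms by (simp add: \<alpha>_def \<beta>_def \<gamma>_def herm_prod_commute[of A C]
        herm_prod_commute[of B A] herm_prod_commute[of C B])
  also have "\<dots> = \<alpha> * \<beta> * \<gamma> + \<sigma> (\<alpha> * \<beta> * \<gamma>)"
    by (simp add: vec3_defs hom_mult algebra_simps)
  finally show ?thesis
    by (simp add: \<alpha>_def \<beta>_def \<gamma>_def)
qed

text \<open>Each isotropy condition says that a number \<open>k\<close> has trace \<open>k + \<sigma> k = 0\<close>; Menelaus'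
  condition turns the product of the three into minus a norm times \<open>\<alpha> \<beta> \<gamma>\<close>, forcing
  \<open>\<alpha> \<beta> \<gamma>\<close> to have trace zero as well, against the Gram determinant.\<close>
lemma no_isotropic_menelaus:
  assumes iso: "isotropic A" "isotropic B" "isotropic C" and det: "det3 A B C \<noteq> 0"
    and isoX: "isotropic (scale3 x2 B + scale3 x3 C)"
    and isoY: "isotropic (scale3 y3 C + scale3 y1 A)"
    and isoZ: "isotropic (scale3 z1 A + scale3 z2 B)"
    and menelaus: "x2 * y3 * z1 + x3 * y1 * z2 = 0"
    and nonzero: "x3 * y1 * z2 \<noteq> 0"
  shows False
proof -
  define \<alpha> \<beta> \<gamma> where "\<alpha> = herm_prod \<sigma> A B" and "\<beta> = herm_prod \<sigma> B C" and "\<gamma> = herm_prod \<sigma> C A"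
  define k1 k2 k3 where "k1 = x2 * \<sigma> x3 * \<beta>" and "k2 = y3 * \<sigma> y1 * \<gamma>" and "k3 = z1 * \<sigma> z2 * \<alpha>"
  have traceless: "\<sigma> k = - k" if "k + \<sigma> k = 0" for k
    using that by (simp add: eq_neg_iff_add_eq_0 add.commute)
  have "\<sigma> k1 = - k1" "\<sigma> k2 = - k2" "\<sigma> k3 = - k3"
    using isoX isoY isoZ iso
    by (simp_all add: traceless herm_prod_isotropic_add k1_def k2_def k3_def \<alpha>_def \<beta>_def \<gamma>_def)
  then have "\<sigma> (k1 * k2 * k3) = - (k1 * k2 * k3)"
    by (simp add: hom_mult)
  moreover define W T where "W = x3 * y1 * z2" and "T = \<alpha> * \<beta> * \<gamma>"
  moreover have "k1 * k2 * k3 = - (W * \<sigma> W * T)"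
  proof -
    have "k1 * k2 * k3 = (x2 * y3 * z1) * \<sigma> W * T"
      by (simp add: k1_def k2_def k3_def W_def T_def hom_mult algebra_simps)
    also have "x2 * y3 * z1 = - W"
      using menelaus by (simp add: W_def eq_neg_iff_add_eq_0)
    finally show ?thesis
      by simp
  qed
  ultimately have "\<sigma> (W * \<sigma> W * T) = - (W * \<sigma> W * T)"
    by (metis minus_minus hom_minus)
  then have "W * \<sigma> W * \<sigma> T = - (W * \<sigma> W * T)"
    by (simp add: hom_mult involutive mult.commute mult.left_commute)
  then have "W * \<sigma> W * (T + \<sigma> T) = 0"
    by (simp add: distrib_left)
  then have "T + \<sigma> T = 0"
    using nonzero by (simp add: W_def)
  then have "det3 A B C * \<sigma> (det3 A B C) = 0"
    using isotropic_gram[OF iso] by (simp add: T_def \<alpha>_def \<beta>_def \<gamma>_def)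
  with det show False
    by simp
qed

text \<open>\<open>det3 U V W = 0\<close> says that \<open>W\<close> lies on the line \<open>UV\<close>: so \<open>X\<close>, \<open>Y\<close>, \<open>Z\<close> lie on
  the sides \<open>BC\<close>, \<open>CA\<close>, \<open>AB\<close> and differ from \<open>B\<close>, \<open>C\<close>, \<open>A\<close>. Cramer's rule gives their
  coordinates with respect to \<open>A\<close>, \<open>B\<close>, \<open>C\<close>.\<close>
lemma isotropic_side_points_not_collinear:
  assumes iso: "isotropic A" "isotropic B" "isotropic C" "isotropic X" "isotropic Y" "isotropic Z"
    and det: "det3 A B C \<noteq> 0"
    and sides: "det3 B C X = 0" "det3 C A Y = 0" "det3 A B Z = 0"
    and off_vertices: "det3 A B X \<noteq> 0" "det3 B C Y \<noteq> 0" "det3 C A Z \<noteq> 0"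
  shows "det3 X Y Z \<noteq> 0"
proof
  assume collinear: "det3 X Y Z = 0"
  define D where "D = det3 A B C"
  have X: "scale3 D X = scale3 (det3 A X C) B + scale3 (det3 A B X) C"
    using cramer3[of A B C X] sides(1) by (simp add: D_def det3_rotate[of X])
  have Y: "scale3 D Y = scale3 (det3 A B Y) C + scale3 (det3 Y B C) A"
    using cramer3[of A B C Y] sides(2)
    by (simp add: D_def det3_rotate[of A Y C] det3_rotate[of Y C A] add.commute)
  have Z: "scale3 D Z = scale3 (det3 Z B C) A + scale3 (det3 A Z C) B"
    using cramer3[of A B C Z] sides(3) by (simp add: D_def)
  have "(det3 A X C * det3 A B Y * det3 Z B C + det3 A B X * det3 Y B C * det3 A Z C) * D
      = det3 (scale3 D X) (scale3 D Y) (scale3 D Z)"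
    unfolding X Y Z by (simp add: det3_add_scale3 D_def)
  also have "\<dots> = 0"
    using collinear by (simp add: det3_scale3)
  finally have menelaus:
    "det3 A X C * det3 A B Y * det3 Z B C + det3 A B X * det3 Y B C * det3 A Z C = 0"
    using det by (simp add: D_def)
  show False
  proof (rule no_isotropic_menelaus[OF iso(1-3) det _ _ _ menelaus])
    show "isotropic (scale3 (det3 A X C) B + scale3 (det3 A B X) C)"
      "isotropic (scale3 (det3 A B Y) C + scale3 (det3 Y B C) A)"
      "isotropic (scale3 (det3 Z B C) A + scale3 (det3 A Z C) B)"
      using iso(4-6) by (simp_all flip: X Y Z add: herm_prod_scale3)
    show "det3 A B X * det3 Y B C * det3 A Z C \<noteq> 0"
      using off_vertices
      by (simp add: det3_rotate[of Y B C] det3_rotate[of A Z C] det3_rotate[of Z C A])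
  qed
qed

end

lemma frobenius_involutive_automorphism:
  assumes "prime_power q" "CARD('a::{field,finite}) = q ^ 2"
  shows "involutive_automorphism (\<lambda>x::'a. x ^ q)"
  by unfold_locales
    (simp_all add: frobenius_add[OF assms] frobenius_involutive[OF assms(2)] power_mult_distrib)

definition oNan_configuration :: "'p set \<Rightarrow> 'p set \<Rightarrow> 'p set \<Rightarrow> 'p set \<Rightarrow> 'p \<Rightarrow> 'p \<Rightarrow> bool" where
  "oNan_configuration a b c d P Q \<longleftrightarrow>
     a \<noteq> b \<and> c \<noteq> d \<and> P \<in> a \<inter> b \<and> Q \<in> c \<inter> d \<and> P \<notin> c \<union> d \<and> Q \<notin> a \<union> b \<and>
     a \<inter> c \<noteq> {} \<and> a \<inter> d \<noteq> {} \<and> b \<inter> c \<noteq> {} \<and> b \<inter> d \<noteq> {}"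

text \<open>With \<open>R\<^sub>1 \<in> a \<inter> c\<close>, \<open>R\<^sub>2 \<in> a \<inter> d\<close>, \<open>R\<^sub>3 \<in> b \<inter> c\<close>, \<open>R\<^sub>4 \<in> b \<inter> d\<close>, the points
  \<open>P\<close>, \<open>R\<^sub>4\<close>, \<open>R\<^sub>3\<close> would be collinear points on the sides of the triangle \<open>Q R\<^sub>1 R\<^sub>2\<close>.\<close>
theorem herm_lines_no_oNan_configuration:
  fixes a b c d :: "'a::{field,finite} vec3 set set"
  assumes "prime_power q" "CARD('a) = q ^ 2"
    and lines: "a \<in> herm_lines q" "b \<in> herm_lines q" "c \<in> herm_lines q" "d \<in> herm_lines q"
  shows "\<not> oNan_configuration a b c d P Q"
proof
  assume "oNan_configuration a b c d P Q"
  then have ab: "a \<noteq> b" and cd: "c \<noteq> d" and P: "P \<in> a" "P \<in> b" "P \<notin> c" "P \<notin> d"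
    and Q: "Q \<in> c" "Q \<in> d" "Q \<notin> a" "Q \<notin> b"
    and "a \<inter> c \<noteq> {}" "a \<inter> d \<noteq> {}" "b \<inter> c \<noteq> {}" "b \<inter> d \<noteq> {}"
    unfolding oNan_configuration_def by auto
  then obtain R1 R2 R3 R4
    where R: "R1 \<in> a" "R1 \<in> c" "R2 \<in> a" "R2 \<in> d" "R3 \<in> b" "R3 \<in> c" "R4 \<in> b" "R4 \<in> d"
    by blast
  note meet = herm_lines_meet_at_most_once[of _ q]
  have "R2 \<notin> c" "R4 \<notin> a" "R3 \<notin> d" "R1 \<noteq> R2"
    using meet[OF lines(3,4) cd] meet[OF lines(1,2) ab] P Q R by blast+
  note iff = mem_herm_line_iff_det3[of _ q]
  have pts: "P \<in> herm_points q" "Q \<in> herm_points q" "R1 \<in> herm_points q" "R2 \<in> herm_points q"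
      "R3 \<in> herm_points q" "R4 \<in> herm_points q"
    using P Q R lines herm_lines_subset by blast+
  have ne: "Q \<noteq> R1" "R2 \<noteq> Q" "P \<noteq> R4"
    using P Q R by auto
  interpret involutive_automorphism "\<lambda>x::'a. x ^ q"
    using frobenius_involutive_automorphism assms(1,2) .
  have iso: "isotropic (rep_vec X)" if "X \<in> herm_points q" for X
    using herm_form_rep_vec[OF that] by (simp add: herm_form_eq_herm_prod)
  have "det3 (rep_vec P) (rep_vec R4) (rep_vec R3) \<noteq> 0"
  proof (rule isotropic_side_points_not_collinear[OF iso[OF pts(2)] iso[OF pts(3)] iso[OF pts(4)]
        iso[OF pts(1)] iso[OF pts(6)] iso[OF pts(5)]])
    show "det3 (rep_vec Q) (rep_vec R1) (rep_vec R2) \<noteq> 0"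
      using iff[OF lines(3) Q(1) R(2) ne(1) pts(4)] \<open>R2 \<notin> c\<close> by simp
    show "det3 (rep_vec R1) (rep_vec R2) (rep_vec P) = 0"
      using iff[OF lines(1) R(1,3) \<open>R1 \<noteq> R2\<close> pts(1)] P(1) by simp
    show "det3 (rep_vec R2) (rep_vec Q) (rep_vec R4) = 0"
      using iff[OF lines(4) R(4) Q(2) ne(2) pts(6)] R(8) by simp
    show "det3 (rep_vec Q) (rep_vec R1) (rep_vec R3) = 0"
      using iff[OF lines(3) Q(1) R(2) ne(1) pts(5)] R(6) by simp
    show "det3 (rep_vec Q) (rep_vec R1) (rep_vec P) \<noteq> 0"
      using iff[OF lines(3) Q(1) R(2) ne(1) pts(1)] P(3) by simp
    show "det3 (rep_vec R1) (rep_vec R2) (rep_vec R4) \<noteq> 0"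
      using iff[OF lines(1) R(1,3) \<open>R1 \<noteq> R2\<close> pts(6)] \<open>R4 \<notin> a\<close> by simp
    show "det3 (rep_vec R2) (rep_vec Q) (rep_vec R3) \<noteq> 0"
      using iff[OF lines(4) R(4) Q(2) ne(2) pts(5)] \<open>R3 \<notin> d\<close> by simp
  qed
  then show False
    using iff[OF lines(2) P(2) R(7) ne(3) pts(5)] R(5) by simp
qed

section \<open>Pairwise meeting lines without O'Nan configurations\<close>

context
  fixes L :: "'p set set"
  assumes meet_at_most_once:
      "\<And>l m X Y. l \<in> L \<Longrightarrow> m \<in> L \<Longrightarrow> l \<noteq> m \<Longrightarrow> X \<in> l \<inter> m \<Longrightarrow> Y \<in> l \<inter> m \<Longrightarrow> X = Y"
    and no_oNan: "\<And>a b c d P Q. a \<in> L \<Longrightarrow> b \<in> L \<Longrightarrow> c \<in> L \<Longrightarrow> d \<in> L \<Longrightarrow>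
      \<not> oNan_configuration a b c d P Q"
    and pairwise_meet: "\<forall>l1\<in>L. \<forall>l2\<in>L. l1 \<inter> l2 \<noteq> {}"
begin

lemma no_point_on_three_lines:
  assumes avoided: "\<And>P. \<exists>c\<in>L. \<exists>d\<in>L. c \<noteq> d \<and> P \<notin> c \<and> P \<notin> d"
    and lines: "a \<in> L" "b \<in> L" "e \<in> L" "a \<noteq> b" "a \<noteq> e" "b \<noteq> e"
    and Q: "Q \<in> a" "Q \<in> b" "Q \<in> e"
  shows False
proof -
  obtain c d where cd: "c \<in> L" "d \<in> L" "c \<noteq> d" "Q \<notin> c" "Q \<notin> d"
    using avoided by blast
  then obtain R where R: "R \<in> c" "R \<in> d"
    using pairwise_meet by blast
  have oNan: "oNan_configuration c d x y R Q"
    if "x \<in> L" "y \<in> L" "x \<noteq> y" "Q \<in> x" "Q \<in> y" "R \<notin> x" "R \<notin> y" for x y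
    using that cd R pairwise_meet unfolding oNan_configuration_def by auto
  have "R \<noteq> Q"
    using R cd by auto
  then have "R \<notin> a \<and> R \<notin> b \<or> R \<notin> a \<and> R \<notin> e \<or> R \<notin> b \<and> R \<notin> e"
    using meet_at_most_once lines Q by blast
  then show False
  proof (elim disjE conjE)
    assume "R \<notin> a" "R \<notin> b"
    then show False
      using no_oNan[OF cd(1,2) lines(1,2)] oNan[OF lines(1,2,4) Q(1,2)] by blast
  next
    assume "R \<notin> a" "R \<notin> e"
    then show False
      using no_oNan[OF cd(1,2) lines(1,3)] oNan[OF lines(1,3,5) Q(1,3)] by blast
  next
    assume "R \<notin> b" "R \<notin> e"
    then show False
      using no_oNan[OF cd(1,2) lines(2,3)] oNan[OF lines(2,3,6) Q(2,3)] by blast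
  qed
qed

theorem concurrent_or_fan:
  assumes "card L \<ge> 3"
  shows "(\<exists>P. \<forall>l\<in>L. P \<in> l) \<or> is_fan L"
proof (rule ccontr)
  assume neither: "\<not> ?thesis"
  have avoided: "\<exists>c\<in>L. \<exists>d\<in>L. c \<noteq> d \<and> P \<notin> c \<and> P \<notin> d" for P
  proof -
    obtain c where c: "c \<in> L" "P \<notin> c"
      using neither by blast
    have "is_fan L" if "\<forall>l\<in>L - {c}. P \<in> l"
      unfolding is_fan_def using assms pairwise_meet c that by blast
    then show ?thesis
      using neither c by blast
  qed
  have "\<not> card L \<le> Suc 0" "finite L"
    using assms by (auto intro: card_ge_0_finite)
  then obtain a b where ab: "a \<in> L" "b \<in> L" "a \<noteq> b"
    using card_le_Suc0_iff_eq by blast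
  then obtain P where P: "P \<in> a" "P \<in> b"
    using pairwise_meet by blast
  obtain c d where cd: "c \<in> L" "d \<in> L" "c \<noteq> d" "P \<notin> c" "P \<notin> d"
    using avoided by blast
  then obtain Q where Q: "Q \<in> c" "Q \<in> d"
    using pairwise_meet by blast
  have "Q \<notin> l" if "l \<in> L" "P \<in> l" for l
  proof
    assume "Q \<in> l"
    moreover have "l \<noteq> c" "l \<noteq> d"
      using that cd by auto
    ultimately show False
      using no_point_on_three_lines[OF avoided that(1) cd(1,2) _ _ cd(3)] Q by blast
  qed
  then have "Q \<notin> a" "Q \<notin> b"
    using ab P by auto
  then have "oNan_configuration a b c d P Q"
    using ab P cd Q pairwise_meet unfolding oNan_configuration_def by auto
  then show False
    using no_oNan ab cd by blast
qed

end

theorem lemma3p1: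
  fixes q :: nat and L :: "('a::{field,finite}) vec3 set set set"
  assumes "prime_power q"
    and "CARD('a) = q ^ 2"
    and "L \<subseteq> herm_lines q"
    and "card L \<ge> 3"
    and "\<forall>l1\<in>L. \<forall>l2\<in>L. l1 \<inter> l2 \<noteq> {}"
  shows "(\<exists>P\<in>herm_points q. \<forall>l\<in>L. P \<in> l) \<or> is_fan L"
proof -
  have "(\<exists>P. \<forall>l\<in>L. P \<in> l) \<or> is_fan L"
  proof (rule concurrent_or_fan[OF _ _ assms(5,4)])
    show "X = Y" if "l \<in> L" "m \<in> L" "l \<noteq> m" "X \<in> l \<inter> m" "Y \<in> l \<inter> m" for l m X Y
      using herm_lines_meet_at_most_once that assms(3) by blast
    show "\<not> oNan_configuration a b c d P Q" if "a \<in> L" "b \<in> L" "c \<in> L" "d \<in> L" for a b c d P Q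
      using herm_lines_no_oNan_configuration[OF assms(1,2)] that assms(3) by blast
  qed
  moreover have "L \<noteq> {}"
    using assms(4) by auto
  then have "P \<in> herm_points q" if "\<forall>l\<in>L. P \<in> l" for P
    using that assms(3) herm_lines_subset by blast
  ultimately show ?thesis
    by blast
qed

end
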